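(* Under Assumption 1, for every $i\in M$ and admissible profile $a=(a_i,a_{-i})$: (1) for $j\ne i$, $D_{j,i}(a)$ depends only on $a_{-i}$; (2) $D_{i,i}(a)=\tilde a_{i,i}+\sum_{k\in M\setminus\{i\}}\tilde a_{k,i}D_{k,i}(a_{-i})<1$; (3) $$\pi_i(a)=\varepsilon_i\,\frac{a_{0,i}+\sum_{j\in M\setminus\{i\}}a_{0,j}D_{j,i}(a_{-i})}{1-\tilde a_{i,i}-\sum_{k\in M\setminus\{i\}}\tilde a_{k,i}D_{k,i}(a_{-i})};$$ (4) $\pi_i$ is continuous and quasi-concave in $a_i\in S_i(b)$.
   Context: Household $0$, firms $M$, $N=M\cup\{0\}$; sectors with $M_0=\{0\}$ (labor) and $M_\ell$ the firms of sector $\ell$. Consumption shares $a_0\in\mathbb{R}^M_{++}$ summing to $1$; firm $i$ has requirements $b_i\ge0$, $\sum_\ell b_{i,\ell}\le1$, $b_{i,0}>0$, and strategy set $S_i(b)=\{a_i\in\mathbb{R}^N_+:\sum_{j\in M_\ell}a_{i,j}=b_{i,\ell}\ \forall\ell\}$; $\varepsilon_i=1-\sum_\ell b_{i,\ell}$. Equilibrium profit $\pi_i(a)=\varepsilon_i\bar v_i$, where $\bar v$ solves $\bar v_j=a_{0,j}+a_{0,j}\sum_i\varepsilon_i\bar v_i+\sum_ia_{i,j}\bar v_i$ ($j\in M$), $\sum_ia_{i,0}\bar v_i=1$. For $i,j\in M$, $\tilde a_{j,i}:=a_{i,j}+\varepsilon_ia_{0,j}$. A walk $(h_1,\dots,h_k)\in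 M^k$ has weight $\prod_{t=1}^{k-1}\tilde a_{h_{t+1},h_t}$. A direct walk from $j$ to $i$ is a walk with $k\ge2$, $h_1=j$, $h_k=i$ and $h_t\ne i$ for $2\le t\le k-1$; a direct walk from $i$ to $i$ is a direct cycle. $D_{j,i}(a)$ is the sum of weights of direct walks from $j$ to $i$ (for $j=i$: of direct cycles around $i$). Assumption 1: $a_0\in\mathbb{R}^M_{++}$, $b_{i,0}>0$ for all $i$, some firm has a positive non-labor requirement. *)

theory Defs
  imports "HOL-Analysis.Analysis"
begin

text \<open>Household is agent 0, firms are M = {1..n}, goods/agents N = {0..n}.
  Sectors are 0..L; sector 0 (labor) is {0}; firm j (1 \<le> j \<le> n) belongs to sector sec j \<in> {1..L}.
  Requirements b i l, consumption shares a0 j, profile a i j (firm i's share on good j).\<close>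

definition firms :: "nat \<Rightarrow> nat set" where
  "firms n = {1..n}"

definition sector :: "nat \<Rightarrow> (nat \<Rightarrow> nat) \<Rightarrow> nat \<Rightarrow> nat set" where
  "sector n sec l = (if l = 0 then {0} else {j \<in> {1..n}. sec j = l})"

text \<open>S_i(b): nonnegative vectors in R^N (functions vanishing outside N) whose sector sums
  equal the requirements.\<close>
definition strat_set :: "nat \<Rightarrow> nat \<Rightarrow> (nat \<Rightarrow> nat) \<Rightarrow> (nat \<Rightarrow> nat \<Rightarrow> real) \<Rightarrow> nat \<Rightarrow> (nat \<Rightarrow> real) set" where
  "strat_set n L sec b i = {x. (\<forall>j. 0 \<le> x j) \<and> (\<forall>j. n < j \<longrightarrow> x j = 0) \<and>
      (\<forall>l\<in>{0..L}. (\<Sum>j\<in>sector n sec l. x j) = b i l)}"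

definition admissible :: "nat \<Rightarrow> nat \<Rightarrow> (nat \<Rightarrow> nat) \<Rightarrow> (nat \<Rightarrow> nat \<Rightarrow> real) \<Rightarrow> (nat \<Rightarrow> nat \<Rightarrow> real) \<Rightarrow> bool" where
  "admissible n L sec b a \<longleftrightarrow> (\<forall>i\<in>firms n. a i \<in> strat_set n L sec b i)"

definition eps :: "nat \<Rightarrow> (nat \<Rightarrow> nat \<Rightarrow> real) \<Rightarrow> nat \<Rightarrow> real" where
  "eps L b i = 1 - (\<Sum>l\<in>{0..L}. b i l)"

text \<open>atil ... j i is the paper's \<tilde>a_{j,i} = a_{i,j} + eps_i a_{0,j}.\<close>
definition atil :: "nat \<Rightarrow> (nat \<Rightarrow> nat \<Rightarrow> real) \<Rightarrow> (nat \<Rightarrow> real) \<Rightarrow> (nat \<Rightarrow> nat \<Rightarrow> real) \<Rightarrow> nat \<Rightarrow> nat \<Rightarrow> real" where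
  "atil L b a0 a j i = a i j + eps L b i * a0 j"

definition walk_weight :: "nat \<Rightarrow> (nat \<Rightarrow> nat \<Rightarrow> real) \<Rightarrow> (nat \<Rightarrow> real) \<Rightarrow> (nat \<Rightarrow> nat \<Rightarrow> real) \<Rightarrow> nat list \<Rightarrow> real" where
  "walk_weight L b a0 a h = (\<Prod>t<length h - 1. atil L b a0 a (h ! (t+1)) (h ! t))"

text \<open>Direct walks (h_1,...,h_k) in M^k from j to i with k \<ge> 2 (0-based list indices here).\<close>
definition direct_walks :: "nat \<Rightarrow> nat \<Rightarrow> nat \<Rightarrow> nat \<Rightarrow> nat list set" where
  "direct_walks n j i k = {h. length h = k \<and> 2 \<le> k \<and> set h \<subseteq> firms n \<and> hd h = j \<and> last h = i \<and>
      (\<forall>t. 1 \<le> t \<and> t < k - 1 \<longrightarrow> h ! t \<noteq> i)}"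

definition Dw :: "nat \<Rightarrow> nat \<Rightarrow> (nat \<Rightarrow> nat \<Rightarrow> real) \<Rightarrow> (nat \<Rightarrow> real) \<Rightarrow> (nat \<Rightarrow> nat \<Rightarrow> real) \<Rightarrow> nat \<Rightarrow> nat \<Rightarrow> real" where
  "Dw n L b a0 a j i = (\<Sum>k. \<Sum>h\<in>direct_walks n j i (k+2). walk_weight L b a0 a h)"

definition eq_system :: "nat \<Rightarrow> nat \<Rightarrow> (nat \<Rightarrow> nat \<Rightarrow> real) \<Rightarrow> (nat \<Rightarrow> real) \<Rightarrow> (nat \<Rightarrow> nat \<Rightarrow> real) \<Rightarrow> (nat \<Rightarrow> real) \<Rightarrow> bool" where
  "eq_system n L b a0 a v \<longleftrightarrow>
     (\<forall>j\<in>firms n. v j = a0 j + a0 j * (\<Sum>i\<in>firms n. eps L b i * v i) + (\<Sum>i\<in>firms n. a i j * v i)) \<and>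
     (\<Sum>i\<in>firms n. a i 0 * v i) = 1 \<and> (\<forall>j. j \<notin> firms n \<longrightarrow> v j = 0)"

definition vbar :: "nat \<Rightarrow> nat \<Rightarrow> (nat \<Rightarrow> nat \<Rightarrow> real) \<Rightarrow> (nat \<Rightarrow> real) \<Rightarrow> (nat \<Rightarrow> nat \<Rightarrow> real) \<Rightarrow> nat \<Rightarrow> real" where
  "vbar n L b a0 a = (THE v. eq_system n L b a0 a v)"

definition profit :: "nat \<Rightarrow> nat \<Rightarrow> (nat \<Rightarrow> nat \<Rightarrow> real) \<Rightarrow> (nat \<Rightarrow> real) \<Rightarrow> (nat \<Rightarrow> nat \<Rightarrow> real) \<Rightarrow> nat \<Rightarrow> real" where
  "profit n L b a0 a i = eps L b i * vbar n L b a0 a i"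

definition quasiconcave_on :: "(nat \<Rightarrow> real) set \<Rightarrow> ((nat \<Rightarrow> real) \<Rightarrow> real) \<Rightarrow> bool" where
  "quasiconcave_on S f \<longleftrightarrow> (\<forall>x\<in>S. \<forall>y\<in>S. \<forall>t\<in>{0..1}.
      min (f x) (f y) \<le> f (\<lambda>j. t * x j + (1 - t) * y j))"

end

(*
  Let W be the matrix \<tilde>a; column m of W sums to 1 - b_{m,0} < 1 on the firms. Splitting a direct walk
  after its first step gives D_{j,i} = \<tilde>a_{i,j} + \<Sum>_{k\<noteq>i} \<tilde>a_{k,j} D_{k,i}, and bounding partial sums by
  column sums gives D_{i,i} \<le> 1 - b_{i,0} < 1. Only the columns j \<noteq> i of W, i.e. only a_{-i}, enter the
  walks from j \<noteq> i to i. The value vector \<bar>v is the unique fixed point of v = a_0 + W v (existence by monotone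
  iteration, uniqueness because W is strictly substochastic); weighting this equation by the D_{.,i}
  yields \<bar>v_i (1 - D_{i,i}) = a_{0,i} + \<Sum>_{j\<noteq>i} a_{0,j} D_{j,i}. In the resulting profit formula only the
  denominator depends on a_i, and affinely, so profit is continuous and quasi-concave in a_i.
*)
theory Submission
  imports Defs
begin

section \<open>Walks that first hit a vertex\<close>

text \<open>\<open>w m j\<close> is the weight of a step from \<open>j\<close> to \<open>m\<close>; \<open>first_passage w F i k j\<close> is the total weight
  of the walks in \<open>F\<close> from \<open>j\<close> to \<open>i\<close> with \<open>k + 1\<close> steps that do not visit \<open>i\<close> in between.\<close>

primrec first_passage :: "('a \<Rightarrow> 'a \<Rightarrow> real) \<Rightarrow> 'a set \<Rightarrow> 'a \<Rightarrow> nat \<Rightarrow> 'a \<Rightarrow> real" where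
  "first_passage w F i 0 j = w i j"
| "first_passage w F i (Suc k) j = (\<Sum>m\<in>F - {i}. w m j * first_passage w F i k m)"

definition passage_sum :: "('a \<Rightarrow> 'a \<Rightarrow> real) \<Rightarrow> 'a set \<Rightarrow> 'a \<Rightarrow> 'a \<Rightarrow> real" where
  "passage_sum w F i j = (\<Sum>k. first_passage w F i k j)"

lemma first_passage_cong:
  assumes "\<forall>m\<in>F. \<forall>j\<in>F - {i}. w' m j = w m j" and "i \<in> F" and "j \<in> F - {i}"
  shows "first_passage w' F i k j = first_passage w F i k j"
  using assms(3)
  by (induction k arbitrary: j) (use assms(1,2) in \<open>auto intro!: sum.cong\<close>)

lemma passage_sum_cong:
  assumes "\<forall>m\<in>F. \<forall>j\<in>F - {i}. w' m j = w m j" and "i \<in> F" and "j \<in> F - {i}"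
  shows "passage_sum w' F i j = passage_sum w F i j"
  using first_passage_cong[OF assms] by (simp add: passage_sum_def)

section \<open>Strictly substochastic matrices\<close>

primrec neumann_iterate :: "('a \<Rightarrow> 'a \<Rightarrow> real) \<Rightarrow> 'a set \<Rightarrow> ('a \<Rightarrow> real) \<Rightarrow> nat \<Rightarrow> 'a \<Rightarrow> real" where
  "neumann_iterate w F c 0 = (\<lambda>j. 0)"
| "neumann_iterate w F c (Suc K) = (\<lambda>j. c j + (\<Sum>m\<in>F. w j m * neumann_iterate w F c K m))"

locale substochastic =
  fixes F :: "'a set" and w :: "'a \<Rightarrow> 'a \<Rightarrow> real"
  assumes finite: "finite F"
    and nonneg: "\<And>j m. j \<in> F \<Longrightarrow> m \<in> F \<Longrightarrow> 0 \<le> w j m"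
    and column_sum_less: "\<And>m. m \<in> F \<Longrightarrow> (\<Sum>j\<in>F. w j m) < 1"
begin

lemma sum_swap_weighted: "(\<Sum>j\<in>F. \<Sum>m\<in>F. w j m * x m) = (\<Sum>m\<in>F. (\<Sum>j\<in>F. w j m) * x m)"
  by (subst sum.swap) (simp add: sum_distrib_right)

context
  fixes i assumes i: "i \<in> F"
begin

lemma first_passage_nonneg: "j \<in> F \<Longrightarrow> 0 \<le> first_passage w F i k j"
  by (induction k arbitrary: j) (auto simp: i nonneg intro!: sum_nonneg)

lemma first_passage_partial_sum_le: "j \<in> F \<Longrightarrow> (\<Sum>k<K. first_passage w F i k j) \<le> (\<Sum>m\<in>F. w m j)"
proof (induction K arbitrary: j)
  case 0
  then show ?case by (auto intro!: sum_nonneg nonneg)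
next
  case (Suc K)
  have "(\<Sum>k<Suc K. first_passage w F i k j)
      = w i j + (\<Sum>m\<in>F - {i}. w m j * (\<Sum>k<K. first_passage w F i k m))"
    by (simp add: sum.lessThan_Suc_shift sum_distrib_left del: sum.lessThan_Suc)
       (rule sum.swap)
  also have "\<dots> \<le> w i j + (\<Sum>m\<in>F - {i}. w m j)"
  proof -
    have "(\<Sum>k<K. first_passage w F i k m) \<le> 1" if "m \<in> F" for m
      using Suc.IH[OF that] column_sum_less[OF that] by linarith
    then show ?thesis
      by (intro add_left_mono sum_mono mult_right_le_one_le)
         (auto intro!: nonneg sum_nonneg first_passage_nonneg Suc.prems)
  qed
  also have "\<dots> = (\<Sum>m\<in>F. w m j)"
    by (rule sum.remove[OF finite i, symmetric])
  finally show ?case .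
qed

lemma summable_first_passage: "j \<in> F \<Longrightarrow> summable (\<lambda>k. first_passage w F i k j)"
  by (rule summableI_nonneg_bounded) (use first_passage_nonneg first_passage_partial_sum_le in auto)

lemma passage_sum_nonneg: "j \<in> F \<Longrightarrow> 0 \<le> passage_sum w F i j"
  unfolding passage_sum_def
  by (rule suminf_nonneg) (use summable_first_passage first_passage_nonneg in auto)

lemma passage_sum_le: "j \<in> F \<Longrightarrow> passage_sum w F i j \<le> (\<Sum>m\<in>F. w m j)"
  unfolding passage_sum_def
  by (rule suminf_le_const) (use summable_first_passage first_passage_partial_sum_le in auto)

lemma passage_sum_self_less_1: "passage_sum w F i i < 1"
  using passage_sum_le[OF i] column_sum_less[OF i] by linarith

lemma passage_sum_rec:
  assumes j: "j \<in> F"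
  shows "passage_sum w F i j = w i j + (\<Sum>m\<in>F - {i}. w m j * passage_sum w F i m)"
proof -
  have "(\<Sum>k. first_passage w F i (Suc k) j)
      = (\<Sum>m\<in>F - {i}. \<Sum>k. w m j * first_passage w F i k m)"
    by (simp, rule suminf_sum) (auto intro: summable_mult summable_first_passage)
  also have "\<dots> = (\<Sum>m\<in>F - {i}. w m j * passage_sum w F i m)"
    using summable_first_passage by (auto simp: passage_sum_def suminf_mult intro!: sum.cong)
  finally show ?thesis
    using suminf_split_head[OF summable_first_passage[OF j]] by (simp add: passage_sum_def)
qed

end

lemma column_sum_margin: obtains \<beta> where "0 < \<beta>" "\<beta> \<le> 1" "\<And>m. m \<in> F \<Longrightarrow> (\<Sum>j\<in>F. w j m) \<le> 1 - \<beta>"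
proof
  let ?\<beta> = "Min (insert 1 ((\<lambda>m. 1 - (\<Sum>j\<in>F. w j m)) ` F))"
  show "0 < ?\<beta>" using finite column_sum_less by (subst Min_gr_iff) auto
  show "?\<beta> \<le> 1" using finite by simp
  show "(\<Sum>j\<in>F. w j m) \<le> 1 - ?\<beta>" if "m \<in> F" for m
  proof -
    have "?\<beta> \<le> 1 - (\<Sum>j\<in>F. w j m)" using finite that by (intro Min_le) auto
    then show ?thesis by linarith
  qed
qed

lemma subinvariant_eq_0:
  assumes nonneg_y: "\<forall>j\<in>F. 0 \<le> y j" and sub: "\<forall>j\<in>F. y j \<le> (\<Sum>m\<in>F. w j m * y m)"
    and j: "j \<in> F"
  shows "y j = 0"
proof -
  have "(\<Sum>m\<in>F. y m) \<le> (\<Sum>m\<in>F. (\<Sum>j\<in>F. w j m) * y m)"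
    using sum_mono[of F y, OF sub[rule_format]] sum_swap_weighted by simp
  then have "(\<Sum>m\<in>F. (1 - (\<Sum>j\<in>F. w j m)) * y m) \<le> 0"
    by (simp add: left_diff_distrib sum_subtractf)
  moreover have weights_pos: "\<forall>m\<in>F. 0 < 1 - (\<Sum>j\<in>F. w j m)"
    using column_sum_less by auto
  ultimately have "\<forall>m\<in>F. (1 - (\<Sum>j\<in>F. w j m)) * y m = 0"
    using nonneg_y finite by (subst sum_nonneg_eq_0_iff[symmetric]) (auto intro!: antisym sum_nonneg)
  then show ?thesis using weights_pos j by force
qed

lemma fixed_point_unique:
  assumes u: "\<forall>j\<in>F. u j = c j + (\<Sum>m\<in>F. w j m * u m)"
    and v: "\<forall>j\<in>F. v j = c j + (\<Sum>m\<in>F. w j m * v m)" and j: "j \<in> F"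
  shows "u j = v j"
proof -
  have "\<bar>u j - v j\<bar> \<le> (\<Sum>m\<in>F. w j m * \<bar>u m - v m\<bar>)" if "j \<in> F" for j
  proof -
    have "u j - v j = (\<Sum>m\<in>F. w j m * u m) - (\<Sum>m\<in>F. w j m * v m)"
      using u[rule_format, OF that] v[rule_format, OF that] by linarith
    then have "\<bar>u j - v j\<bar> = \<bar>\<Sum>m\<in>F. w j m * (u m - v m)\<bar>"
      by (simp only: right_diff_distrib sum_subtractf)
    also have "\<dots> \<le> (\<Sum>m\<in>F. w j m * \<bar>u m - v m\<bar>)"
      using nonneg[OF that] by (auto intro: order_trans[OF sum_abs] simp: abs_mult)
    finally show ?thesis .
  qed
  then show ?thesis using subinvariant_eq_0[of "\<lambda>j. \<bar>u j - v j\<bar>" j] j by auto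
qed

lemma fixed_point_weighted_sum:
  assumes v: "\<forall>j\<in>F. v j = c j + (\<Sum>m\<in>F. w j m * v m)"
  shows "(\<Sum>m\<in>F. (1 - (\<Sum>j\<in>F. w j m)) * v m) = (\<Sum>j\<in>F. c j)"
proof -
  have "(\<Sum>j\<in>F. v j) = (\<Sum>j\<in>F. c j) + (\<Sum>m\<in>F. (\<Sum>j\<in>F. w j m) * v m)"
    using v by (simp add: sum.distrib sum_swap_weighted cong: sum.cong)
  then show ?thesis by (simp add: left_diff_distrib sum_subtractf)
qed

context
  fixes c :: "'a \<Rightarrow> real" assumes c_nonneg: "\<forall>j\<in>F. 0 \<le> c j"
begin

lemma neumann_iterate_nonneg: "j \<in> F \<Longrightarrow> 0 \<le> neumann_iterate w F c K j"
  by (induction K arbitrary: j) (auto simp: c_nonneg nonneg intro!: sum_nonneg add_nonneg_nonneg)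

lemma neumann_iterate_mono: "j \<in> F \<Longrightarrow> neumann_iterate w F c K j \<le> neumann_iterate w F c (Suc K) j"
proof (induction K arbitrary: j)
  case 0
  then show ?case using neumann_iterate_nonneg[of j 1] by simp
next
  case (Suc K)
  then show ?case
    by (simp only: neumann_iterate.simps)
       (auto intro!: add_left_mono sum_mono mult_left_mono nonneg)
qed

lemma neumann_iterate_sum_le:
  assumes "0 < \<beta>" "\<beta> \<le> 1" "\<And>m. m \<in> F \<Longrightarrow> (\<Sum>j\<in>F. w j m) \<le> 1 - \<beta>"
  shows "(\<Sum>j\<in>F. neumann_iterate w F c K j) \<le> (\<Sum>j\<in>F. c j) / \<beta>"
proof (induction K)
  case 0
  then show ?case using assms c_nonneg by (simp add: sum_nonneg)
next
  case (Suc K)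
  let ?x = "neumann_iterate w F c K"
  have "(\<Sum>j\<in>F. neumann_iterate w F c (Suc K) j) = (\<Sum>j\<in>F. c j) + (\<Sum>m\<in>F. (\<Sum>j\<in>F. w j m) * ?x m)"
    by (simp add: sum.distrib sum_swap_weighted)
  also have "\<dots> \<le> (\<Sum>j\<in>F. c j) + (1 - \<beta>) * (\<Sum>m\<in>F. ?x m)"
    using assms(3) neumann_iterate_nonneg
    by (auto simp: sum_distrib_left intro!: sum_mono mult_right_mono)
  also have "\<dots> \<le> (\<Sum>j\<in>F. c j) + (1 - \<beta>) * ((\<Sum>j\<in>F. c j) / \<beta>)"
    using Suc assms(2) by (intro add_left_mono mult_left_mono) auto
  also have "\<dots> = (\<Sum>j\<in>F. c j) / \<beta>"
    using assms(1) by (simp add: field_simps)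
  finally show ?case .
qed

lemma fixed_point_exists:
  obtains v where "\<forall>j\<in>F. v j = c j + (\<Sum>m\<in>F. w j m * v m)"
proof -
  obtain \<beta> where \<beta>: "0 < \<beta>" "\<beta> \<le> 1" "\<And>m. m \<in> F \<Longrightarrow> (\<Sum>j\<in>F. w j m) \<le> 1 - \<beta>"
    using column_sum_margin by blast
  let ?x = "neumann_iterate w F c"
  define v where "v j = (SUP K. ?x K j)" for j
  have lim: "(\<lambda>K. ?x K j) \<longlonglongrightarrow> v j" if j: "j \<in> F" for j
    unfolding v_def
  proof (rule LIMSEQ_incseq_SUP)
    have "?x K j \<le> (\<Sum>j\<in>F. c j) / \<beta>" for K
      using member_le_sum[of j F "?x K"] neumann_iterate_nonneg neumann_iterate_sum_le[OF \<beta>, of K]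
        finite j by fastforce
    then show "bdd_above (range (\<lambda>K. ?x K j))" by (intro bdd_aboveI2)
    show "incseq (\<lambda>K. ?x K j)" using neumann_iterate_mono[OF j] by (rule incseq_SucI)
  qed
  have "v j = c j + (\<Sum>m\<in>F. w j m * v m)" if j: "j \<in> F" for j
  proof (rule LIMSEQ_unique)
    show "(\<lambda>K. ?x (Suc K) j) \<longlonglongrightarrow> v j" using lim[OF j] by (rule LIMSEQ_Suc)
    show "(\<lambda>K. ?x (Suc K) j) \<longlonglongrightarrow> c j + (\<Sum>m\<in>F. w j m * v m)"
      using lim by (auto intro!: tendsto_intros)
  qed
  then show thesis by (intro that[of v]) blast
qed

end

text \<open>Weight the fixed-point equation at each \<open>m \<noteq> i\<close> by the first-passage sum from \<open>m\<close>;
  by \<open>passage_sum_rec\<close> everything cancels except the contribution of row \<open>i\<close>.\<close>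

lemma fixed_point_first_passage:
  assumes v: "\<forall>j\<in>F. v j = c j + (\<Sum>m\<in>F. w j m * v m)" and i: "i \<in> F"
  shows "v i * (1 - passage_sum w F i i) = c i + (\<Sum>m\<in>F - {i}. c m * passage_sum w F i m)"
proof -
  let ?F = "F - {i}"
  let ?D = "passage_sum w F i"
  have "(\<Sum>m\<in>?F. ?D m * v m) = (\<Sum>m\<in>?F. ?D m * c m) + (\<Sum>m\<in>?F. ?D m * (\<Sum>j\<in>F. w m j * v j))"
    using v by (simp add: sum.distrib[symmetric] distrib_left)
  also have "(\<Sum>m\<in>?F. ?D m * (\<Sum>j\<in>F. w m j * v j)) = (\<Sum>j\<in>F. v j * (\<Sum>m\<in>?F. w m j * ?D m))"
    unfolding sum_distrib_left by (subst sum.swap) (simp add: mult_ac)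
  also have "\<dots> = (\<Sum>j\<in>F. v j * ?D j - w i j * v j)"
  proof (rule sum.cong[OF refl])
    fix j assume "j \<in> F"
    then have "(\<Sum>m\<in>?F. w m j * ?D m) = ?D j - w i j"
      using passage_sum_rec[OF i] by (simp only: eq_diff_eq')
    then show "v j * (\<Sum>m\<in>?F. w m j * ?D m) = v j * ?D j - w i j * v j"
      by (simp add: right_diff_distrib)
  qed
  also have "\<dots> = (\<Sum>j\<in>F. v j * ?D j) - (\<Sum>j\<in>F. w i j * v j)"
    by (rule sum_subtractf)
  also have "(\<Sum>j\<in>F. v j * ?D j) = v i * ?D i + (\<Sum>m\<in>?F. ?D m * v m)"
    using sum.remove[OF finite i, of "\<lambda>j. v j * ?D j"] by (simp add: mult_ac)
  also have "(\<Sum>j\<in>F. w i j * v j) = v i - c i"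
    using v i by simp
  finally show ?thesis by (simp add: algebra_simps)
qed

end

section \<open>Direct walks\<close>

lemma walk_weight_Cons:
  assumes "h \<noteq> []"
  shows "walk_weight L b a0 a (j # h) = atil L b a0 a (hd h) j * walk_weight L b a0 a h"
  using assms by (cases h) (simp_all add: walk_weight_def prod.lessThan_Suc_shift del: prod.lessThan_Suc)

lemma finite_direct_walks: "finite (direct_walks n j i k)"
proof (rule finite_subset)
  show "direct_walks n j i k \<subseteq> {h. set h \<subseteq> firms n \<and> length h = k}"
    by (auto simp: direct_walks_def)
  show "finite {h. set h \<subseteq> firms n \<and> length h = k}"
    by (rule finite_lists_length_eq) (simp add: firms_def)
qed

lemma direct_walks_two:
  assumes "j \<in> firms n" "i \<in> firms n"
  shows "direct_walks n j i 2 = {[j, i]}"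
proof -
  have "length h = 2 \<Longrightarrow> hd h = j \<Longrightarrow> last h = i \<Longrightarrow> h = [j, i]" for h :: "nat list"
    by (cases h; cases "tl h") auto
  then show ?thesis using assms by (auto simp: direct_walks_def)
qed

lemma Cons_mem_direct_walks:
  assumes "2 \<le> k"
  shows "x # h \<in> direct_walks n j i (Suc k) \<longleftrightarrow>
    x = j \<and> j \<in> firms n \<and> hd h \<in> firms n - {i} \<and> h \<in> direct_walks n (hd h) i k"
proof -
  have "(\<forall>t. 1 \<le> t \<and> t < k \<longrightarrow> (x # h) ! t \<noteq> i) \<longleftrightarrow> (\<forall>s<k - 1. h ! s \<noteq> i)"
  proof
    assume "\<forall>t. 1 \<le> t \<and> t < k \<longrightarrow> (x # h) ! t \<noteq> i"
    then show "\<forall>s<k - 1. h ! s \<noteq> i" by (metis Suc_le_mono le0 less_diff_conv nth_Cons_Suc One_nat_def Suc_eq_plus1)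
  next
    assume inner: "\<forall>s<k - 1. h ! s \<noteq> i"
    show "\<forall>t. 1 \<le> t \<and> t < k \<longrightarrow> (x # h) ! t \<noteq> i"
    proof (intro allI impI)
      fix t assume "1 \<le> t \<and> t < k"
      then obtain s where "t = Suc s" "s < k - 1" by (cases t) auto
      then show "(x # h) ! t \<noteq> i" using inner by simp
    qed
  qed
  also have "\<dots> \<longleftrightarrow> h ! 0 \<noteq> i \<and> (\<forall>s. 1 \<le> s \<and> s < k - 1 \<longrightarrow> h ! s \<noteq> i)"
  proof -
    have "\<forall>s<k - 1. s = 0 \<or> 1 \<le> s" by auto
    moreover have "0 < k - 1" using assms by simp
    ultimately show ?thesis by blast
  qed
  finally show ?thesis
    using assms by (cases h) (auto simp: direct_walks_def)
qed

lemma direct_walks_Suc: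
  assumes "2 \<le> k" and j: "j \<in> firms n"
  shows "direct_walks n j i (Suc k) = Cons j ` (\<Union>m\<in>firms n - {i}. direct_walks n m i k)"
proof
  show "direct_walks n j i (Suc k) \<subseteq> Cons j ` (\<Union>m\<in>firms n - {i}. direct_walks n m i k)"
  proof
    fix h assume h: "h \<in> direct_walks n j i (Suc k)"
    then obtain x h' where hx: "h = x # h'" by (cases h) (auto simp: direct_walks_def)
    with h have "x = j" "hd h' \<in> firms n - {i}" "h' \<in> direct_walks n (hd h') i k"
      by (simp_all only: Cons_mem_direct_walks[OF assms(1)])
    then show "h \<in> Cons j ` (\<Union>m\<in>firms n - {i}. direct_walks n m i k)"
      unfolding hx by blast
  qed
  show "Cons j ` (\<Union>m\<in>firms n - {i}. direct_walks n m i k) \<subseteq> direct_walks n j i (Suc k)"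
  proof
    fix h assume "h \<in> Cons j ` (\<Union>m\<in>firms n - {i}. direct_walks n m i k)"
    then obtain m h' where hx: "h = j # h'" and m: "m \<in> firms n - {i}" and h': "h' \<in> direct_walks n m i k"
      by blast
    then have "hd h' = m" by (simp add: direct_walks_def)
    then show "h \<in> direct_walks n j i (Suc k)"
      unfolding hx Cons_mem_direct_walks[OF assms(1)] using j m h' by simp
  qed
qed

lemma sum_direct_walks_eq_first_passage:
  assumes i: "i \<in> firms n" and j: "j \<in> firms n"
  shows "(\<Sum>h\<in>direct_walks n j i (k + 2). walk_weight L b a0 a h)
    = first_passage (atil L b a0 a) (firms n) i k j"
  using j
proof (induction k arbitrary: j)
  case 0
  then show ?case using direct_walks_two[OF 0 i] by (simp add: walk_weight_def numeral_2_eq_2)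
next
  case (Suc k)
  let ?w = "atil L b a0 a" and ?U = "\<lambda>m. direct_walks n m i (k + 2)"
  have "(\<Sum>h\<in>direct_walks n j i (Suc k + 2). walk_weight L b a0 a h)
      = (\<Sum>h\<in>Cons j ` (\<Union>m\<in>firms n - {i}. ?U m). walk_weight L b a0 a h)"
    by (simp only: add_Suc direct_walks_Suc[OF le_add2 Suc.prems])
  also have "\<dots> = (\<Sum>h\<in>(\<Union>m\<in>firms n - {i}. ?U m). walk_weight L b a0 a (j # h))"
    by (rule sum.reindex_cong[where l="Cons j"]) (auto simp: inj_on_def)
  also have "\<dots> = (\<Sum>m\<in>firms n - {i}. \<Sum>h\<in>?U m. walk_weight L b a0 a (j # h))"
    by (rule sum.UNION_disjoint) (auto simp: finite_direct_walks firms_def, auto simp: direct_walks_def)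
  also have "\<dots> = (\<Sum>m\<in>firms n - {i}. \<Sum>h\<in>?U m. ?w m j * walk_weight L b a0 a h)"
  proof (intro sum.cong refl)
    fix m h assume "h \<in> ?U m"
    then have "h \<noteq> []" "hd h = m" by (auto simp: direct_walks_def)
    then show "walk_weight L b a0 a (j # h) = ?w m j * walk_weight L b a0 a h"
      by (simp add: walk_weight_Cons)
  qed
  also have "\<dots> = (\<Sum>m\<in>firms n - {i}. ?w m j * (\<Sum>h\<in>?U m. walk_weight L b a0 a h))"
    by (simp add: sum_distrib_left)
  also have "\<dots> = first_passage ?w (firms n) i (Suc k) j"
    using Suc.IH by simp
  finally show ?case .
qed

lemma Dw_eq_passage_sum:
  assumes "i \<in> firms n" "j \<in> firms n"
  shows "Dw n L b a0 a j i = passage_sum (atil L b a0 a) (firms n) i j"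
  using sum_direct_walks_eq_first_passage[OF assms] by (simp add: Dw_def passage_sum_def)

lemma Dw_eq_if_others_eq:
  assumes i: "i \<in> firms n" and others: "\<forall>h\<in>firms n - {i}. a' h = a h" and j: "j \<in> firms n - {i}"
  shows "Dw n L b a0 a' j i = Dw n L b a0 a j i"
proof -
  have "\<forall>m\<in>firms n. \<forall>k\<in>firms n - {i}. atil L b a0 a' m k = atil L b a0 a m k"
    using others by (simp add: atil_def)
  then show ?thesis
    using passage_sum_cong[OF _ i j] i j by (simp add: Dw_eq_passage_sum)
qed

section \<open>The production economy\<close>

lemma strat_set_labor:
  assumes "x \<in> strat_set n L sec b m"
  shows "x 0 = b m 0"
proof -
  have "(\<Sum>j\<in>sector n sec 0. x j) = b m 0" using assms by (simp add: strat_set_def)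
  then show ?thesis by (simp add: sector_def)
qed

lemma strat_set_convex_comb:
  fixes t :: real
  assumes x: "x \<in> strat_set n L sec b m" and y: "y \<in> strat_set n L sec b m" and t: "t \<in> {0..1}"
  shows "(\<lambda>j. t * x j + (1 - t) * y j) \<in> strat_set n L sec b m"
proof -
  have "(\<Sum>j\<in>sector n sec l. t * x j + (1 - t) * y j) = b m l" if "l \<in> {0..L}" for l
  proof -
    have "(\<Sum>j\<in>sector n sec l. t * x j + (1 - t) * y j)
        = t * (\<Sum>j\<in>sector n sec l. x j) + (1 - t) * (\<Sum>j\<in>sector n sec l. y j)"
      by (simp add: sum.distrib sum_distrib_left)
    also have "\<dots> = b m l" using x y that by (simp add: strat_set_def algebra_simps)
    finally show ?thesis .
  qed
  moreover have "\<forall>j. 0 \<le> t * x j + (1 - t) * y j"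
    using x y t by (auto simp: strat_set_def)
  ultimately show ?thesis
    using x y by (simp add: strat_set_def)
qed

lemma quasiconcave_on_const_divide:
  fixes S :: "(nat \<Rightarrow> real) set"
  assumes f: "\<And>x. x \<in> S \<Longrightarrow> f x = C / g x" and "0 \<le> C"
    and convex: "\<And>x y t. x \<in> S \<Longrightarrow> y \<in> S \<Longrightarrow> t \<in> {0..1::real} \<Longrightarrow> (\<lambda>j. t * x j + (1 - t) * y j) \<in> S"
    and pos: "\<And>x. x \<in> S \<Longrightarrow> 0 < g x"
    and quasiconvex: "\<And>x y t. x \<in> S \<Longrightarrow> y \<in> S \<Longrightarrow> t \<in> {0..1::real} \<Longrightarrow>
      g (\<lambda>j. t * x j + (1 - t) * y j) \<le> max (g x) (g y)"
  shows "quasiconcave_on S f"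
  unfolding quasiconcave_on_def
proof (intro ballI)
  fix x y t assume xy: "x \<in> S" "y \<in> S" and t: "t \<in> {0..1::real}"
  let ?z = "\<lambda>j. t * x j + (1 - t) * y j"
  have "C / max (g x) (g y) \<le> C / g ?z"
    using quasiconvex[OF xy t] pos[OF convex[OF xy t]] \<open>0 \<le> C\<close> by (intro divide_left_mono) auto
  then show "min (f x) (f y) \<le> f ?z"
    using f xy convex[OF xy t] by (auto simp: max_def min_def split: if_splits)
qed

locale economy =
  fixes n L :: nat and sec :: "nat \<Rightarrow> nat" and b :: "nat \<Rightarrow> nat \<Rightarrow> real" and a0 :: "nat \<Rightarrow> real"
  assumes sec: "\<forall>j\<in>firms n. sec j \<in> {1..L}"
    and a0_pos: "\<forall>j\<in>firms n. 0 < a0 j"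
    and a0_sum: "(\<Sum>j\<in>firms n. a0 j) = 1"
    and b_nonneg: "\<forall>k\<in>firms n. \<forall>l\<in>{0..L}. 0 \<le> b k l"
    and b_sum: "\<forall>k\<in>firms n. (\<Sum>l\<in>{0..L}. b k l) \<le> 1"
    and b_labor: "\<forall>k\<in>firms n. 0 < b k 0"
begin

lemma strat_set_sum_firms:
  assumes "x \<in> strat_set n L sec b m"
  shows "(\<Sum>j\<in>firms n. x j) = (\<Sum>l\<in>{1..L}. b m l)"
proof -
  have "(\<Sum>j\<in>firms n. x j) = (\<Sum>l\<in>{1..L}. \<Sum>j\<in>{j \<in> firms n. sec j = l}. x j)"
    using sec by (intro sum.group[symmetric]) (auto simp: firms_def)
  also have "\<dots> = (\<Sum>l\<in>{1..L}. b m l)"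
  proof (rule sum.cong[OF refl])
    fix l assume l: "l \<in> {1..L}"
    then have "{j \<in> firms n. sec j = l} = sector n sec l" by (auto simp: sector_def firms_def)
    then show "(\<Sum>j\<in>{j \<in> firms n. sec j = l}. x j) = b m l" using assms l by (simp add: strat_set_def)
  qed
  finally show ?thesis .
qed

lemma eps_nonneg: "m \<in> firms n \<Longrightarrow> 0 \<le> eps L b m"
  using b_sum by (simp add: eps_def)

context
  fixes a assumes adm: "admissible n L sec b a"
begin

lemma atil_nonneg: "m \<in> firms n \<Longrightarrow> j \<in> firms n \<Longrightarrow> 0 \<le> atil L b a0 a j m"
  using adm eps_nonneg a0_pos
  by (auto simp: atil_def admissible_def strat_set_def intro!: add_nonneg_nonneg)

lemma atil_column_sum:
  assumes m: "m \<in> firms n"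
  shows "(\<Sum>j\<in>firms n. atil L b a0 a j m) = 1 - b m 0"
proof -
  have "(\<Sum>j\<in>firms n. atil L b a0 a j m) = (\<Sum>j\<in>firms n. a m j) + eps L b m * (\<Sum>j\<in>firms n. a0 j)"
    by (simp add: atil_def sum.distrib sum_distrib_left)
  also have "\<dots> = (\<Sum>l\<in>{1..L}. b m l) + eps L b m"
    using strat_set_sum_firms adm m a0_sum by (simp add: admissible_def)
  also have "\<dots> = 1 - b m 0"
    by (simp add: eps_def sum.atLeast_Suc_atMost)
  finally show ?thesis .
qed

lemma substochastic_atil: "substochastic (firms n) (atil L b a0 a)"
  by unfold_locales (auto simp: atil_nonneg atil_column_sum b_labor, simp add: firms_def)

interpretation atil: substochastic "firms n" "atil L b a0 a"
  by (rule substochastic_atil)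

lemma eq_system_iff:
  "eq_system n L b a0 a v \<longleftrightarrow>
    (\<forall>j\<in>firms n. v j = a0 j + (\<Sum>m\<in>firms n. atil L b a0 a j m * v m)) \<and> (\<forall>j. j \<notin> firms n \<longrightarrow> v j = 0)"
proof -
  have fixed_point_iff:
    "(\<forall>j\<in>firms n. v j = a0 j + a0 j * (\<Sum>m\<in>firms n. eps L b m * v m) + (\<Sum>m\<in>firms n. a m j * v m))
      \<longleftrightarrow> (\<forall>j\<in>firms n. v j = a0 j + (\<Sum>m\<in>firms n. atil L b a0 a j m * v m))"
    by (simp add: atil_def algebra_simps sum.distrib sum_distrib_left)
  have "(\<Sum>m\<in>firms n. a m 0 * v m) = 1"
    if fixed_point: "\<forall>j\<in>firms n. v j = a0 j + (\<Sum>m\<in>firms n. atil L b a0 a j m * v m)"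
  proof -
    have "(\<Sum>m\<in>firms n. (1 - (\<Sum>j\<in>firms n. atil L b a0 a j m)) * v m) = 1"
      using atil.fixed_point_weighted_sum[OF fixed_point] a0_sum by simp
    moreover have "\<forall>m\<in>firms n. a m 0 = b m 0"
      using adm strat_set_labor by (auto simp: admissible_def)
    ultimately show ?thesis by (simp add: atil_column_sum cong: sum.cong)
  qed
  then show ?thesis
    unfolding eq_system_def using fixed_point_iff by blast
qed

lemma vbar_fixed_point:
  "\<forall>j\<in>firms n. vbar n L b a0 a j = a0 j + (\<Sum>m\<in>firms n. atil L b a0 a j m * vbar n L b a0 a m)"
proof -
  have "\<forall>j\<in>firms n. 0 \<le> a0 j" using a0_pos by (simp add: less_imp_le)
  then obtain v where v: "\<forall>j\<in>firms n. v j = a0 j + (\<Sum>m\<in>firms n. atil L b a0 a j m * v m)"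
    by (rule atil.fixed_point_exists)
  let ?v = "\<lambda>j. if j \<in> firms n then v j else 0"
  have "?v j = a0 j + (\<Sum>m\<in>firms n. atil L b a0 a j m * ?v m)" if j: "j \<in> firms n" for j
  proof -
    have "(\<Sum>m\<in>firms n. atil L b a0 a j m * ?v m) = (\<Sum>m\<in>firms n. atil L b a0 a j m * v m)"
      by (rule sum.cong) auto
    moreover have "v j = a0 j + (\<Sum>m\<in>firms n. atil L b a0 a j m * v m)"
      using v j by blast
    ultimately show ?thesis using j by simp
  qed
  then have "eq_system n L b a0 a ?v"
    by (simp add: eq_system_iff)
  moreover have "u = ?v" if "eq_system n L b a0 a u" for u
  proof
    fix j
    show "u j = ?v j"
    proof (cases "j \<in> firms n")
      case True
      moreover have "\<forall>j\<in>firms n. u j = a0 j + (\<Sum>m\<in>firms n. atil L b a0 a j m * u m)"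
        using that unfolding eq_system_iff by blast
      ultimately show ?thesis
        using v atil.fixed_point_unique[of u a0 v j] by simp
    next
      case False
      then show ?thesis using that unfolding eq_system_iff by simp
    qed
  qed
  ultimately have "eq_system n L b a0 a (vbar n L b a0 a)"
    unfolding vbar_def by (rule theI)
  then show ?thesis unfolding eq_system_iff by blast
qed

context
  fixes i assumes i: "i \<in> firms n"
begin

lemma sum_Dw_eq_passage_sum:
  "(\<Sum>k\<in>firms n - {i}. f k * Dw n L b a0 a k i) = (\<Sum>k\<in>firms n - {i}. f k * passage_sum (atil L b a0 a) (firms n) i k)"
  using Dw_eq_passage_sum[OF i] by (intro sum.cong) auto

lemma Dw_nonneg: "j \<in> firms n \<Longrightarrow> 0 \<le> Dw n L b a0 a j i"
  using atil.passage_sum_nonneg[OF i] by (simp add: Dw_eq_passage_sum[OF i])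

lemma Dw_self_less_1: "Dw n L b a0 a i i < 1"
  using atil.passage_sum_self_less_1[OF i] by (simp add: Dw_eq_passage_sum[OF i i])

lemma Dw_rec:
  assumes j: "j \<in> firms n"
  shows "Dw n L b a0 a j i = atil L b a0 a i j + (\<Sum>k\<in>firms n - {i}. atil L b a0 a k j * Dw n L b a0 a k i)"
  using atil.passage_sum_rec[OF i j] by (simp add: i j Dw_eq_passage_sum sum_Dw_eq_passage_sum)

lemma vbar_first_passage:
  "vbar n L b a0 a i * (1 - Dw n L b a0 a i i) = a0 i + (\<Sum>j\<in>firms n - {i}. a0 j * Dw n L b a0 a j i)"
  using atil.fixed_point_first_passage[OF vbar_fixed_point i]
  by (simp add: i Dw_eq_passage_sum sum_Dw_eq_passage_sum)

lemma profit_denominator_eq: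
  "1 - atil L b a0 a i i - (\<Sum>k\<in>firms n - {i}. atil L b a0 a k i * Dw n L b a0 a k i) = 1 - Dw n L b a0 a i i"
  using Dw_rec[OF i] by simp

lemma profit_eq_quotient:
  "profit n L b a0 a i = eps L b i *
     ((a0 i + (\<Sum>j\<in>firms n - {i}. a0 j * Dw n L b a0 a j i)) /
      (1 - atil L b a0 a i i - (\<Sum>k\<in>firms n - {i}. atil L b a0 a k i * Dw n L b a0 a k i)))"
  using vbar_first_passage Dw_self_less_1
  by (simp add: profit_def profit_denominator_eq eq_divide_eq)

end
end

lemma profit_response_eq:
  assumes adm: "admissible n L sec b a" and i: "i \<in> firms n" and x: "x \<in> strat_set n L sec b i"
  defines "g \<equiv> 1 - (x i + eps L b i * a0 i) - (\<Sum>k\<in>firms n - {i}. (x k + eps L b i * a0 k) * Dw n L b a0 a k i)"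
  shows "profit n L b a0 (a(i := x)) i = eps L b i * (a0 i + (\<Sum>j\<in>firms n - {i}. a0 j * Dw n L b a0 a j i)) / g"
    and "0 < g"
proof -
  have adm': "admissible n L sec b (a(i := x))"
    using adm x by (simp add: admissible_def)
  have Dw_eq: "\<And>j. j \<in> firms n - {i} \<Longrightarrow> Dw n L b a0 (a(i := x)) j i = Dw n L b a0 a j i"
    using Dw_eq_if_others_eq[OF i] by simp
  have g_eq: "1 - atil L b a0 (a(i := x)) i i - (\<Sum>k\<in>firms n - {i}. atil L b a0 (a(i := x)) k i * Dw n L b a0 (a(i := x)) k i) = g"
  proof -
    have "(\<Sum>k\<in>firms n - {i}. atil L b a0 (a(i := x)) k i * Dw n L b a0 (a(i := x)) k i)
        = (\<Sum>k\<in>firms n - {i}. (x k + eps L b i * a0 k) * Dw n L b a0 a k i)"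
      by (rule sum.cong) (simp_all add: atil_def Dw_eq)
    then show ?thesis by (simp add: g_def atil_def)
  qed
  show "profit n L b a0 (a(i := x)) i = eps L b i * (a0 i + (\<Sum>j\<in>firms n - {i}. a0 j * Dw n L b a0 a j i)) / g"
  proof -
    have "(\<Sum>j\<in>firms n - {i}. a0 j * Dw n L b a0 (a(i := x)) j i) = (\<Sum>j\<in>firms n - {i}. a0 j * Dw n L b a0 a j i)"
      by (rule sum.cong) (simp_all add: Dw_eq)
    then show ?thesis using profit_eq_quotient[OF adm' i] g_eq by simp
  qed
  show "0 < g"
    using Dw_self_less_1[OF adm' i] profit_denominator_eq[OF adm' i] g_eq by simp
qed

lemma profit_response_continuous_quasiconcave:
  assumes adm: "admissible n L sec b a" and i: "i \<in> firms n"
  shows "continuous_on (strat_set n L sec b i) (\<lambda>x. profit n L b a0 (a(i := x)) i)"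
    and "quasiconcave_on (strat_set n L sec b i) (\<lambda>x. profit n L b a0 (a(i := x)) i)"
proof -
  let ?S = "strat_set n L sec b i" and ?D = "\<lambda>k. Dw n L b a0 a k i" and ?e = "eps L b i"
  define C where "C = ?e * (a0 i + (\<Sum>j\<in>firms n - {i}. a0 j * ?D j))"
  define g where "g x = 1 - (x i + ?e * a0 i) - (\<Sum>k\<in>firms n - {i}. (x k + ?e * a0 k) * ?D k)"
    for x :: "nat \<Rightarrow> real"
  have profit_eq: "profit n L b a0 (a(i := x)) i = C / g x" and g_pos: "0 < g x" if "x \<in> ?S" for x
    using profit_response_eq[OF adm i that] by (simp_all add: C_def g_def)
  have coordinate: "continuous_on ?S (\<lambda>x. x k)" for k
    by (rule continuous_on_subset[OF continuous_on_product_coordinates]) simp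
  have "continuous_on ?S g"
    unfolding g_def by (intro continuous_intros coordinate)
  then have "continuous_on ?S (\<lambda>x. C / g x)"
    using g_pos by (intro continuous_intros) force+
  then show "continuous_on ?S (\<lambda>x. profit n L b a0 (a(i := x)) i)"
    using profit_eq continuous_on_cong by force
  have g_affine: "g (\<lambda>j. t * x j + (1 - t) * y j) = t * g x + (1 - t) * g y" for t x y
  proof -
    have "(\<Sum>k\<in>firms n - {i}. (t * x k + (1 - t) * y k + ?e * a0 k) * ?D k)
        = (\<Sum>k\<in>firms n - {i}. t * ((x k + ?e * a0 k) * ?D k) + (1 - t) * ((y k + ?e * a0 k) * ?D k))"
      by (rule sum.cong) (simp_all add: algebra_simps)
    also have "\<dots> = t * (\<Sum>k\<in>firms n - {i}. (x k + ?e * a0 k) * ?D k)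
        + (1 - t) * (\<Sum>k\<in>firms n - {i}. (y k + ?e * a0 k) * ?D k)"
      by (simp only: sum.distrib sum_distrib_left)
    finally show ?thesis by (simp add: g_def algebra_simps)
  qed
  have g_quasiconvex: "g (\<lambda>j. t * x j + (1 - t) * y j) \<le> max (g x) (g y)" if "t \<in> {0..1::real}" for t x y
    unfolding g_affine using that by (intro convex_bound_le) auto
  have C_nonneg: "0 \<le> C"
    unfolding C_def using eps_nonneg[OF i] a0_pos i Dw_nonneg[OF adm i]
    by (intro mult_nonneg_nonneg add_nonneg_nonneg sum_nonneg) (auto intro: less_imp_le)
  show "quasiconcave_on ?S (\<lambda>x. profit n L b a0 (a(i := x)) i)"
    by (rule quasiconcave_on_const_divide[where C = C and g = g])
       (use profit_eq C_nonneg strat_set_convex_comb g_pos g_quasiconvex in auto)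
qed

end

theorem mainTheorem7:
  fixes n L :: nat and sec :: "nat \<Rightarrow> nat" and b :: "nat \<Rightarrow> nat \<Rightarrow> real"
    and a0 :: "nat \<Rightarrow> real" and a :: "nat \<Rightarrow> nat \<Rightarrow> real" and i :: nat
  assumes sec: "\<forall>j\<in>firms n. sec j \<in> {1..L}"
    and a0_pos: "\<forall>j\<in>firms n. 0 < a0 j"
    and a0_sum: "(\<Sum>j\<in>firms n. a0 j) = 1"
    and b_nonneg: "\<forall>k\<in>firms n. \<forall>l\<in>{0..L}. 0 \<le> b k l"
    and b_sum: "\<forall>k\<in>firms n. (\<Sum>l\<in>{0..L}. b k l) \<le> 1"
    and b_labor: "\<forall>k\<in>firms n. 0 < b k 0"
    and b_some: "\<exists>k\<in>firms n. \<exists>l\<in>{1..L}. 0 < b k l"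
    and i: "i \<in> firms n"
    and adm: "admissible n L sec b a"
  shows
    "(\<forall>a'. admissible n L sec b a' \<and> (\<forall>h\<in>firms n - {i}. a' h = a h) \<longrightarrow>
        (\<forall>j\<in>firms n - {i}. Dw n L b a0 a' j i = Dw n L b a0 a j i))
     \<and> Dw n L b a0 a i i = atil L b a0 a i i + (\<Sum>k\<in>firms n - {i}. atil L b a0 a k i * Dw n L b a0 a k i)
     \<and> Dw n L b a0 a i i < 1
     \<and> profit n L b a0 a i = eps L b i *
          ((a0 i + (\<Sum>j\<in>firms n - {i}. a0 j * Dw n L b a0 a j i)) /
           (1 - atil L b a0 a i i - (\<Sum>k\<in>firms n - {i}. atil L b a0 a k i * Dw n L b a0 a k i)))
     \<and> continuous_on (strat_set n L sec b i) (\<lambda>x. profit n L b a0 (a(i := x)) i)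
     \<and> quasiconcave_on (strat_set n L sec b i) (\<lambda>x. profit n L b a0 (a(i := x)) i)"
proof -
  interpret economy n L sec b a0
    by unfold_locales (fact sec a0_pos a0_sum b_nonneg b_sum b_labor)+
  show ?thesis
    using Dw_eq_if_others_eq[OF i] Dw_rec[OF adm i i] Dw_self_less_1[OF adm i]
      profit_eq_quotient[OF adm i] profit_response_continuous_quasiconcave[OF adm i]
    by blast
qed

end
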